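(* Fix an integer $n\ge 1$. For every formula $\varphi$ in the variables $x_1,\dots,x_n$, $\chi^+([\varphi]_\equiv)$, computed in $\mathcal{NM}^-_n$, equals the number of Boolean assignments $\mu:\{x_1,\dots,x_n\}\to\{0,1\}$ such that $\varphi$ evaluates to $1$ under $\mu$ in the two-element NM chain.
   Context: An NM algebra is an algebra $\langle A,\wedge,\vee,\odot,\to,\bot,\top\rangle$ such that $(A,\wedge,\vee,\bot,\top)$ is a bounded lattice, $\langle A,\odot,\top\rangle$ is a commutative monoid, and for all $x,y,z$: $x\odot y\le z$ iff $x\le y\to z$; $(x\to y)\vee(y\to x)=\top$; $\neg(x\odot y)\vee((x\wedge y)\to(x\odot y))=\top$ where $\neg x:=x\to\bot$; and $\neg\neg x=x$. An NM$^-$ algebra is an NM algebra additionally satisfying $\neg(\neg x^2)^2\leftrightarrow(\neg(\neg x)^2)^2=\top$, where $y^2:=y\odot y$ and $u\leftrightarrow v:=(u\to v)\odot(v\to u)$. $\mathcal{NM}^-_n$ is the free NM$^-$ algebra on $n$ generators, i.e. the Lindenbaum algebra of formulas in $x_1,\dots,x_n$ modulo equivalence in the logic NM$^-$; $[\varphi]_\equiv$ is the class of $\varphi$. It is a finite distributive lattice. A valuation on a distributive lattice $L$ is a map $\nu:L\to\mathbb{R}$ with $\nu(x)+\nu(y)=\nu(x\vee y)+\nu(x\wedge y)$; on a finite distributive lattice it is uniquely determined by its values on join-irreducible elements and on $\bot$. An element is join-irreducible if it is not $\bot$ and $x=y\vee z$ implies $x=y$ or $x=z$. The idempotent Euler characteristic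 $\chi^+:\mathcal{NM}^-_n\to\mathbb{R}$ is the unique valuation with $\chi^+(\bot)=0$ and, for each join-irreducible $g$, $\chi^+(g)=1$ if $g\odot g=g$ and $\chi^+(g)=0$ otherwise. *)

theory Defs
  imports Complex_Main
begin

text \<open>Variable x_(i+1) is represented by Var i; formulas in x_1..x_n are those
  whose variables are all < n.\<close>

datatype form =
    Var nat
  | Bot
  | Top
  | And form form
  | Or form form
  | Conj form form   (* strong conjunction, odot *)
  | Imp form form

fun vars :: "form \<Rightarrow> nat set" where
  "vars (Var i) = {i}"
| "vars Bot = {}"
| "vars Top = {}"
| "vars (And a b) = vars a \<union> vars b"
| "vars (Or a b) = vars a \<union> vars b"
| "vars (Conj a b) = vars a \<union> vars b"
| "vars (Imp a b) = vars a \<union> vars b"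

definition in_vars :: "nat \<Rightarrow> form \<Rightarrow> bool" where
  "in_vars n \<phi> \<longleftrightarrow> vars \<phi> \<subseteq> {..<n}"

record 'a nm_ops =
  carrier :: "'a set"
  meet :: "'a \<Rightarrow> 'a \<Rightarrow> 'a"
  join :: "'a \<Rightarrow> 'a \<Rightarrow> 'a"
  mult :: "'a \<Rightarrow> 'a \<Rightarrow> 'a"
  imp  :: "'a \<Rightarrow> 'a \<Rightarrow> 'a"
  bot  :: "'a"
  top  :: "'a"

definition nm_le :: "('a, 'b) nm_ops_scheme \<Rightarrow> 'a \<Rightarrow> 'a \<Rightarrow> bool" where
  "nm_le A x y \<longleftrightarrow> meet A x y = x"

definition nm_neg :: "('a, 'b) nm_ops_scheme \<Rightarrow> 'a \<Rightarrow> 'a" where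
  "nm_neg A x = imp A x (bot A)"

definition nm_sq :: "('a, 'b) nm_ops_scheme \<Rightarrow> 'a \<Rightarrow> 'a" where
  "nm_sq A x = mult A x x"

definition nm_biimp :: "('a, 'b) nm_ops_scheme \<Rightarrow> 'a \<Rightarrow> 'a \<Rightarrow> 'a" where
  "nm_biimp A u v = mult A (imp A u v) (imp A v u)"

definition nm_algebra :: "('a, 'b) nm_ops_scheme \<Rightarrow> bool" where
  "nm_algebra A \<longleftrightarrow>
     bot A \<in> carrier A \<and> top A \<in> carrier A \<and>
     (\<forall>x\<in>carrier A. \<forall>y\<in>carrier A.
        meet A x y \<in> carrier A \<and> join A x y \<in> carrier A \<and>
        mult A x y \<in> carrier A \<and> imp A x y \<in> carrier A) \<and>
     \<comment> \<open>bounded lattice\<close>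
     (\<forall>x\<in>carrier A. \<forall>y\<in>carrier A.
        meet A x y = meet A y x \<and> join A x y = join A y x \<and>
        meet A x (join A x y) = x \<and> join A x (meet A x y) = x) \<and>
     (\<forall>x\<in>carrier A. \<forall>y\<in>carrier A. \<forall>z\<in>carrier A.
        meet A x (meet A y z) = meet A (meet A x y) z \<and>
        join A x (join A y z) = join A (join A x y) z) \<and>
     (\<forall>x\<in>carrier A. meet A (bot A) x = bot A \<and> join A (top A) x = top A) \<and>
     \<comment> \<open>commutative monoid\<close>
     (\<forall>x\<in>carrier A. \<forall>y\<in>carrier A. mult A x y = mult A y x) \<and>
     (\<forall>x\<in>carrier A. \<forall>y\<in>carrier A. \<forall>z\<in>carrier A.
        mult A x (mult A y z) = mult A (mult A x y) z) \<and>
     (\<forall>x\<in>carrier A. mult A (top A) x = x) \<and>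
     \<comment> \<open>residuation\<close>
     (\<forall>x\<in>carrier A. \<forall>y\<in>carrier A. \<forall>z\<in>carrier A.
        nm_le A (mult A x y) z \<longleftrightarrow> nm_le A x (imp A y z)) \<and>
     \<comment> \<open>prelinearity\<close>
     (\<forall>x\<in>carrier A. \<forall>y\<in>carrier A. join A (imp A x y) (imp A y x) = top A) \<and>
     \<comment> \<open>NM axiom\<close>
     (\<forall>x\<in>carrier A. \<forall>y\<in>carrier A.
        join A (nm_neg A (mult A x y)) (imp A (meet A x y) (mult A x y)) = top A) \<and>
     \<comment> \<open>involution\<close>
     (\<forall>x\<in>carrier A. nm_neg A (nm_neg A x) = x)"

definition nm_minus_algebra :: "('a, 'b) nm_ops_scheme \<Rightarrow> bool" where
  "nm_minus_algebra A \<longleftrightarrow> nm_algebra A \<and>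
     (\<forall>x\<in>carrier A.
        nm_biimp A (nm_neg A (nm_sq A (nm_neg A (nm_sq A x))))
                   (nm_sq A (nm_neg A (nm_sq A (nm_neg A x)))) = top A)"

fun eval :: "('a, 'b) nm_ops_scheme \<Rightarrow> (nat \<Rightarrow> 'a) \<Rightarrow> form \<Rightarrow> 'a" where
  "eval A v (Var i) = v i"
| "eval A v Bot = bot A"
| "eval A v Top = top A"
| "eval A v (And a b) = meet A (eval A v a) (eval A v b)"
| "eval A v (Or a b) = join A (eval A v a) (eval A v b)"
| "eval A v (Conj a b) = mult A (eval A v a) (eval A v b)"
| "eval A v (Imp a b) = imp A (eval A v a) (eval A v b)"

text \<open>By algebraizability, two formulas are equivalent in NM^- iff they evaluate equally
  in every NM^- algebra under every assignment.  Since any counterexample lives in a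
  finitely generated (hence countable) subalgebra, it suffices to range over NM^- algebras
  whose carrier is a subset of nat.\<close>

definition nm_equiv :: "form \<Rightarrow> form \<Rightarrow> bool" where
  "nm_equiv \<phi> \<psi> \<longleftrightarrow>
     (\<forall>(A :: nat nm_ops) v. nm_minus_algebra A \<longrightarrow> (\<forall>i. v i \<in> carrier A) \<longrightarrow>
        eval A v \<phi> = eval A v \<psi>)"

definition join_irreducible :: "nat \<Rightarrow> form \<Rightarrow> bool" where
  "join_irreducible n g \<longleftrightarrow> in_vars n g \<and> \<not> nm_equiv g Bot \<and>
     (\<forall>a b. in_vars n a \<longrightarrow> in_vars n b \<longrightarrow> nm_equiv g (Or a b) \<longrightarrow>
        nm_equiv g a \<or> nm_equiv g b)"

definition idempotent_class :: "form \<Rightarrow> bool" where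
  "idempotent_class g \<longleftrightarrow> nm_equiv (Conj g g) g"

text \<open>A real-valued function on the Lindenbaum algebra NM^-_n, represented as a function on
  formulas in the first n variables that respects equivalence.\<close>

definition is_lattice_valuation :: "nat \<Rightarrow> (form \<Rightarrow> real) \<Rightarrow> bool" where
  "is_lattice_valuation n \<nu> \<longleftrightarrow>
     (\<forall>a b. in_vars n a \<longrightarrow> in_vars n b \<longrightarrow> nm_equiv a b \<longrightarrow> \<nu> a = \<nu> b) \<and>
     (\<forall>a b. in_vars n a \<longrightarrow> in_vars n b \<longrightarrow> \<nu> a + \<nu> b = \<nu> (Or a b) + \<nu> (And a b))"

definition is_chi_plus :: "nat \<Rightarrow> (form \<Rightarrow> real) \<Rightarrow> bool" where
  "is_chi_plus n \<nu> \<longleftrightarrow> is_lattice_valuation n \<nu> \<and> \<nu> Bot = 0 \<and>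
     (\<forall>g. join_irreducible n g \<longrightarrow> \<nu> g = (if idempotent_class g then 1 else 0))"

fun bool_eval :: "(nat \<Rightarrow> bool) \<Rightarrow> form \<Rightarrow> bool" where
  "bool_eval \<mu> (Var i) = \<mu> i"
| "bool_eval \<mu> Bot = False"
| "bool_eval \<mu> Top = True"
| "bool_eval \<mu> (And a b) = (bool_eval \<mu> a \<and> bool_eval \<mu> b)"
| "bool_eval \<mu> (Or a b) = (bool_eval \<mu> a \<or> bool_eval \<mu> b)"
| "bool_eval \<mu> (Conj a b) = (bool_eval \<mu> a \<and> bool_eval \<mu> b)"
| "bool_eval \<mu> (Imp a b) = (bool_eval \<mu> a \<longrightarrow> bool_eval \<mu> b)"

text \<open>Boolean assignments on x_1..x_n, represented as functions nat => bool that are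
  False outside {..<n} (a bijective encoding).\<close>

definition bool_assignments :: "nat \<Rightarrow> (nat \<Rightarrow> bool) set" where
  "bool_assignments n = {\<mu>. \<forall>i. n \<le> i \<longrightarrow> \<not> \<mu> i}"

end

theory Submission
  imports Defs "HOL-Library.FuncSet"
begin

text \<open>Two formulas in \<open>n\<close> variables are NM-minus-equivalent iff they agree under all
  evaluations in the finite chains \<open>nm_chain N\<close> with \<open>N \<le> 2n + 2\<close>: a counterexample in an
  arbitrary NM-minus algebra is carried into such a chain by ranking, modulo a prime filter,
  the finitely many values involved. Hence the free algebra is finite and a valuation on it is
  determined by its values at \<open>\<bottom>\<close> and at the join-irreducibles. A join-irreducible \<open>g\<close> cannot
  split along the covers \<open>(\<not>x \<rightarrow> x) \<or> (x \<rightarrow> \<not>x)\<close> and \<open>\<not>(g \<odot> g) \<or> (g \<rightarrow> g \<odot> g)\<close>, so it has at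
  most one Boolean model, and it has one iff it is idempotent. Counting Boolean models is
  therefore a valuation taking the values prescribed for the idempotent Euler characteristic,
  and it is the only one.\<close>

definition chain_mult :: "nat \<Rightarrow> nat \<Rightarrow> nat \<Rightarrow> nat" where
  "chain_mult N k l = (if k + l \<le> 2*N then 0 else min k l)"

text \<open>The NM chain \<open>{0, \<dots>, 2N}\<close> with negation \<open>k \<mapsto> 2N - k\<close>, minus its negation fixpoint
  \<open>N\<close>, at which the NM-minus axiom fails.\<close>

definition nm_chain :: "nat \<Rightarrow> nat nm_ops" where
  "nm_chain N = \<lparr>carrier = {k. k \<le> 2*N \<and> k \<noteq> N}, meet = min, join = max,
     mult = chain_mult N, imp = (\<lambda>k l. 2*N - chain_mult N k (2*N - l)), bot = 0, top = 2*N\<rparr>"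

lemma nm_chain_simps [simp]:
  "carrier (nm_chain N) = {k. k \<le> 2*N \<and> k \<noteq> N}" "meet (nm_chain N) = min"
  "join (nm_chain N) = max" "mult (nm_chain N) = chain_mult N"
  "imp (nm_chain N) = (\<lambda>k l. 2*N - chain_mult N k (2*N - l))"
  "bot (nm_chain N) = 0" "top (nm_chain N) = 2*N"
  by (simp_all add: nm_chain_def)

lemma chain_imp_eq:
  "x \<le> 2*N \<Longrightarrow> y \<le> 2*N \<Longrightarrow>
    2*N - chain_mult N x (2*N - y) = (if x \<le> y then 2*N else max (2*N - x) y)"
  by (auto simp: chain_mult_def)

lemma chain_neg: "x \<le> 2*N \<Longrightarrow> 2*N - chain_mult N x (2*N) = 2*N - x"
  by (auto simp: chain_mult_def)

lemma chain_sq: "chain_mult N x x = (if x \<le> N then 0 else x)"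
  by (auto simp: chain_mult_def)

lemma chain_mult_assoc: "chain_mult N x (chain_mult N y z) = chain_mult N (chain_mult N x y) z"
  by (auto simp: chain_mult_def)

lemma chain_mult_closed:
  "x \<le> 2*N \<Longrightarrow> y \<le> 2*N \<Longrightarrow> x \<noteq> N \<Longrightarrow> y \<noteq> N \<Longrightarrow>
    chain_mult N x y \<le> 2*N \<and> chain_mult N x y \<noteq> N"
  by (auto simp: chain_mult_def min_def)

lemma chain_residuation:
  "x \<le> 2*N \<Longrightarrow> y \<le> 2*N \<Longrightarrow> z \<le> 2*N \<Longrightarrow>
    (min (chain_mult N x y) z = chain_mult N x y) = (min x (2*N - chain_mult N y (2*N - z)) = x)"
  by (simp add: chain_imp_eq) (auto simp: chain_mult_def min_def max_def)

lemma chain_nm_axiom: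
  assumes "x \<le> 2*N" "y \<le> 2*N"
  shows "max (2*N - chain_mult N (chain_mult N x y) (2*N))
             (2*N - chain_mult N (min x y) (2*N - chain_mult N x y)) = 2*N"
proof -
  have "chain_mult N x y \<le> 2*N" using assms by (auto simp: chain_mult_def)
  then show ?thesis using assms by (simp add: chain_imp_eq chain_mult_def)
qed

lemma chain_nm_minus_axiom:
  assumes "x \<le> 2*N" "x \<noteq> N" "N \<ge> 1"
  shows "let neg = (\<lambda>k. 2*N - chain_mult N k (2*N)); sq = (\<lambda>k. chain_mult N k k);
             im = (\<lambda>k l. 2*N - chain_mult N k (2*N - l));
             L = neg (sq (neg (sq x))); R = sq (neg (sq (neg x)))
         in chain_mult N (im L R) (im R L) = 2*N"
  using assms
  by (cases "x < N") (simp_all add: Let_def chain_sq chain_neg chain_imp_eq, simp_all add: chain_mult_def)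

lemma nm_minus_algebra_nm_chain:
  assumes N: "N \<ge> 1"
  shows "nm_minus_algebra (nm_chain N)"
proof -
  have imp_closed: "2*N - chain_mult N x (2*N - y) \<in> carrier (nm_chain N)"
    if "x \<in> carrier (nm_chain N)" "y \<in> carrier (nm_chain N)" for x y
    using that by (simp add: chain_imp_eq) (auto simp: max_def)
  have "nm_algebra (nm_chain N)"
    unfolding nm_algebra_def nm_le_def nm_neg_def
    using N imp_closed
    by (simp add: chain_mult_closed chain_mult_assoc chain_residuation chain_imp_eq chain_nm_axiom
        chain_neg, auto simp: chain_mult_def min_def max_def)
  moreover have "nm_biimp (nm_chain N)
      (nm_neg (nm_chain N) (nm_sq (nm_chain N) (nm_neg (nm_chain N) (nm_sq (nm_chain N) x))))
      (nm_sq (nm_chain N) (nm_neg (nm_chain N) (nm_sq (nm_chain N) (nm_neg (nm_chain N) x))))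
      = top (nm_chain N)"
    if "x \<in> carrier (nm_chain N)" for x
    using chain_nm_minus_axiom[of x N] that N
    by (simp add: Let_def nm_biimp_def nm_neg_def nm_sq_def)
  ultimately show ?thesis unfolding nm_minus_algebra_def by blast
qed

locale nm_alg =
  fixes A :: "('a, 'b) nm_ops_scheme"
  assumes nm: "nm_algebra A"
begin

abbreviation "C \<equiv> carrier A"
abbreviation A_le (infix "\<sqsubseteq>" 50) where "x \<sqsubseteq> y \<equiv> nm_le A x y"
abbreviation A_meet (infixl "\<sqinter>" 70) where "x \<sqinter> y \<equiv> meet A x y"
abbreviation A_join (infixl "\<squnion>" 65) where "x \<squnion> y \<equiv> join A x y"
abbreviation A_mult (infixl "\<otimes>" 70) where "x \<otimes> y \<equiv> mult A x y"
abbreviation A_imp (infixr "\<leadsto>" 25) where "x \<leadsto> y \<equiv> imp A x y"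
abbreviation bot_A ("\<zero>") where "\<zero> \<equiv> bot A"
abbreviation top_A ("\<one>") where "\<one> \<equiv> top A"
abbreviation neg where "neg x \<equiv> x \<leadsto> \<zero>"

lemmas nm_axioms = nm[unfolded nm_algebra_def nm_neg_def]

lemma bot_in [simp]: "\<zero> \<in> C"
  using nm_axioms by meson

lemma top_in [simp]: "\<one> \<in> C"
  using nm_axioms by meson

lemma meet_in [simp]: "x \<in> C \<Longrightarrow> y \<in> C \<Longrightarrow> x \<sqinter> y \<in> C"
  using nm_axioms by meson

lemma join_in [simp]: "x \<in> C \<Longrightarrow> y \<in> C \<Longrightarrow> x \<squnion> y \<in> C"
  using nm_axioms by meson

lemma mult_in [simp]: "x \<in> C \<Longrightarrow> y \<in> C \<Longrightarrow> x \<otimes> y \<in> C"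
  using nm_axioms by meson

lemma imp_in [simp]: "x \<in> C \<Longrightarrow> y \<in> C \<Longrightarrow> (x \<leadsto> y) \<in> C"
  using nm_axioms by meson

lemma meet_comm: "x \<in> C \<Longrightarrow> y \<in> C \<Longrightarrow> x \<sqinter> y = y \<sqinter> x"
  using nm_axioms by meson

lemma join_comm: "x \<in> C \<Longrightarrow> y \<in> C \<Longrightarrow> x \<squnion> y = y \<squnion> x"
  using nm_axioms by meson

lemma meet_absorb: "x \<in> C \<Longrightarrow> y \<in> C \<Longrightarrow> x \<sqinter> (x \<squnion> y) = x"
  using nm_axioms by meson

lemma join_absorb: "x \<in> C \<Longrightarrow> y \<in> C \<Longrightarrow> x \<squnion> (x \<sqinter> y) = x"
  using nm_axioms by meson

lemma meet_assoc: "x \<in> C \<Longrightarrow> y \<in> C \<Longrightarrow> z \<in> C \<Longrightarrow> x \<sqinter> (y \<sqinter> z) = (x \<sqinter> y) \<sqinter> z"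
  using nm_axioms by meson

lemma join_assoc: "x \<in> C \<Longrightarrow> y \<in> C \<Longrightarrow> z \<in> C \<Longrightarrow> x \<squnion> (y \<squnion> z) = (x \<squnion> y) \<squnion> z"
  using nm_axioms by meson

lemma bot_meet: "x \<in> C \<Longrightarrow> \<zero> \<sqinter> x = \<zero>"
  using nm_axioms by meson

lemma top_join: "x \<in> C \<Longrightarrow> \<one> \<squnion> x = \<one>"
  using nm_axioms by meson

lemma mult_comm: "x \<in> C \<Longrightarrow> y \<in> C \<Longrightarrow> x \<otimes> y = y \<otimes> x"
  using nm_axioms by meson

lemma mult_assoc: "x \<in> C \<Longrightarrow> y \<in> C \<Longrightarrow> z \<in> C \<Longrightarrow> x \<otimes> (y \<otimes> z) = (x \<otimes> y) \<otimes> z"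
  using nm_axioms by meson

lemma top_mult [simp]: "x \<in> C \<Longrightarrow> \<one> \<otimes> x = x"
  using nm_axioms by meson

lemma residuation: "x \<in> C \<Longrightarrow> y \<in> C \<Longrightarrow> z \<in> C \<Longrightarrow> x \<otimes> y \<sqsubseteq> z \<longleftrightarrow> x \<sqsubseteq> (y \<leadsto> z)"
  using nm_axioms by meson

lemma prelinearity: "x \<in> C \<Longrightarrow> y \<in> C \<Longrightarrow> (x \<leadsto> y) \<squnion> (y \<leadsto> x) = \<one>"
  using nm_axioms by meson

lemma nm_law: "x \<in> C \<Longrightarrow> y \<in> C \<Longrightarrow> neg (x \<otimes> y) \<squnion> (x \<sqinter> y \<leadsto> x \<otimes> y) = \<one>"
  using nm_axioms by meson

lemma neg_neg [simp]: "x \<in> C \<Longrightarrow> neg (neg x) = x"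
  using nm_axioms by meson

lemma le_iff_meet: "x \<sqsubseteq> y \<longleftrightarrow> x \<sqinter> y = x"
  by (simp add: nm_le_def)

lemma meet_idem: "x \<in> C \<Longrightarrow> x \<sqinter> x = x"
  by (metis meet_absorb join_absorb meet_in)

lemma le_refl [simp]: "x \<in> C \<Longrightarrow> x \<sqsubseteq> x"
  by (simp add: le_iff_meet meet_idem)

lemma le_antisym: "x \<in> C \<Longrightarrow> y \<in> C \<Longrightarrow> x \<sqsubseteq> y \<Longrightarrow> y \<sqsubseteq> x \<Longrightarrow> x = y"
  by (metis le_iff_meet meet_comm)

lemma le_trans: "x \<in> C \<Longrightarrow> y \<in> C \<Longrightarrow> z \<in> C \<Longrightarrow> x \<sqsubseteq> y \<Longrightarrow> y \<sqsubseteq> z \<Longrightarrow> x \<sqsubseteq> z"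
  by (metis le_iff_meet meet_assoc)

lemma meet_le1: "x \<in> C \<Longrightarrow> y \<in> C \<Longrightarrow> x \<sqinter> y \<sqsubseteq> x"
  by (metis le_iff_meet meet_assoc meet_comm meet_idem)

lemma meet_glb: "x \<in> C \<Longrightarrow> y \<in> C \<Longrightarrow> z \<in> C \<Longrightarrow> z \<sqsubseteq> x \<Longrightarrow> z \<sqsubseteq> y \<Longrightarrow> z \<sqsubseteq> x \<sqinter> y"
  by (metis le_iff_meet meet_assoc)

lemma le_iff_join: "x \<in> C \<Longrightarrow> y \<in> C \<Longrightarrow> x \<sqsubseteq> y \<longleftrightarrow> x \<squnion> y = y"
  by (metis le_iff_meet meet_absorb join_absorb join_comm meet_comm)

lemma join_ub1: "x \<in> C \<Longrightarrow> y \<in> C \<Longrightarrow> x \<sqsubseteq> x \<squnion> y"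
  by (metis meet_absorb le_iff_meet)

lemma join_ub2: "x \<in> C \<Longrightarrow> y \<in> C \<Longrightarrow> y \<sqsubseteq> x \<squnion> y"
  by (metis join_ub1 join_comm)

lemma join_lub: "x \<in> C \<Longrightarrow> y \<in> C \<Longrightarrow> z \<in> C \<Longrightarrow> x \<sqsubseteq> z \<Longrightarrow> y \<sqsubseteq> z \<Longrightarrow> x \<squnion> y \<sqsubseteq> z"
  by (metis le_iff_join join_assoc join_in)

lemma bot_le [simp]: "x \<in> C \<Longrightarrow> \<zero> \<sqsubseteq> x"
  by (simp add: le_iff_meet bot_meet)

lemma le_top [simp]: "x \<in> C \<Longrightarrow> x \<sqsubseteq> \<one>"
  by (metis le_iff_join join_comm top_join top_in)

lemma top_le: "x \<in> C \<Longrightarrow> \<one> \<sqsubseteq> x \<Longrightarrow> x = \<one>"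
  by (simp add: le_antisym)

lemma mult_top [simp]: "x \<in> C \<Longrightarrow> x \<otimes> \<one> = x"
  by (metis mult_comm top_in top_mult)

lemma modus_ponens: "x \<in> C \<Longrightarrow> y \<in> C \<Longrightarrow> x \<otimes> (x \<leadsto> y) \<sqsubseteq> y"
  using residuation[of "x \<leadsto> y" x y] by (simp add: mult_comm)

lemma mult_mono:
  assumes "x \<in> C" "y \<in> C" "z \<in> C" "y \<sqsubseteq> z"
  shows "x \<otimes> y \<sqsubseteq> x \<otimes> z"
proof -
  have "z \<sqsubseteq> (x \<leadsto> x \<otimes> z)" using assms residuation[of z x "x \<otimes> z"] by (simp add: mult_comm)
  then have "y \<sqsubseteq> (x \<leadsto> x \<otimes> z)" using assms le_trans[of y z "x \<leadsto> x \<otimes> z"] by simp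
  then show ?thesis using assms residuation[of y x "x \<otimes> z"] by (simp add: mult_comm)
qed

lemma mult_mono2:
  assumes "x \<in> C" "y \<in> C" "x' \<in> C" "y' \<in> C" "x \<sqsubseteq> x'" "y \<sqsubseteq> y'"
  shows "x \<otimes> y \<sqsubseteq> x' \<otimes> y'"
proof -
  have "x \<otimes> y \<sqsubseteq> x \<otimes> y'" using assms by (simp add: mult_mono)
  moreover have "x \<otimes> y' \<sqsubseteq> x' \<otimes> y'" using assms mult_mono[of y' x x'] by (simp add: mult_comm)
  ultimately show ?thesis using assms le_trans by (meson mult_in)
qed

lemma mult_le2: "x \<in> C \<Longrightarrow> y \<in> C \<Longrightarrow> x \<otimes> y \<sqsubseteq> y"
  using mult_mono[of y x \<one>] by (simp add: mult_comm)

lemma mult_le1: "x \<in> C \<Longrightarrow> y \<in> C \<Longrightarrow> x \<otimes> y \<sqsubseteq> x"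
  using mult_le2[of y x] by (simp add: mult_comm)

lemma imp_eq_top_iff: "x \<in> C \<Longrightarrow> y \<in> C \<Longrightarrow> (x \<leadsto> y) = \<one> \<longleftrightarrow> x \<sqsubseteq> y"
  using residuation[of \<one> x y] top_le[of "x \<leadsto> y"] by auto

lemma eq_iff_same_lower_bounds:
  assumes "a \<in> C" "b \<in> C" "\<And>z. z \<in> C \<Longrightarrow> z \<sqsubseteq> a \<longleftrightarrow> z \<sqsubseteq> b"
  shows "a = b"
  using assms le_antisym le_refl by blast

lemma curry:
  assumes "x \<in> C" "y \<in> C" "z \<in> C"
  shows "(x \<leadsto> (y \<leadsto> z)) = (x \<otimes> y \<leadsto> z)"
proof (rule eq_iff_same_lower_bounds)
  fix w assume w: "w \<in> C"
  have "w \<sqsubseteq> (x \<leadsto> (y \<leadsto> z)) \<longleftrightarrow> w \<otimes> x \<otimes> y \<sqsubseteq> z"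
    using assms w residuation[of w x "y \<leadsto> z"] residuation[of "w \<otimes> x" y z] by simp
  also have "\<dots> \<longleftrightarrow> w \<sqsubseteq> (x \<otimes> y \<leadsto> z)"
    using assms w residuation[of w "x \<otimes> y" z] by (simp add: mult_assoc)
  finally show "w \<sqsubseteq> (x \<leadsto> (y \<leadsto> z)) \<longleftrightarrow> w \<sqsubseteq> (x \<otimes> y \<leadsto> z)" .
qed (use assms in simp_all)

lemma top_imp [simp]: "x \<in> C \<Longrightarrow> (\<one> \<leadsto> x) = x"
proof (rule eq_iff_same_lower_bounds)
  fix z assume "x \<in> C" "z \<in> C"
  then show "z \<sqsubseteq> (\<one> \<leadsto> x) \<longleftrightarrow> z \<sqsubseteq> x" using residuation[of z \<one> x] by simp
qed simp_all

lemma bot_imp [simp]: "x \<in> C \<Longrightarrow> (\<zero> \<leadsto> x) = \<one>"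
  by (simp add: imp_eq_top_iff)

lemma neg_bot [simp]: "neg \<zero> = \<one>"
  using neg_neg[of \<one>] by simp

lemma imp_via_neg: "x \<in> C \<Longrightarrow> y \<in> C \<Longrightarrow> (x \<leadsto> y) = neg (x \<otimes> neg y)"
  using curry[of x "neg y" \<zero>] by simp

lemma contraposition: "x \<in> C \<Longrightarrow> y \<in> C \<Longrightarrow> (neg y \<leadsto> neg x) = (x \<leadsto> y)"
  using imp_via_neg[of "neg y" "neg x"] imp_via_neg[of x y] by (simp add: mult_comm)

lemma mult_join_distrib:
  assumes "x \<in> C" "y \<in> C" "z \<in> C"
  shows "x \<otimes> (y \<squnion> z) = (x \<otimes> y) \<squnion> (x \<otimes> z)"
proof -
  let ?r = "(x \<otimes> y) \<squnion> (x \<otimes> z)"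
  have r: "?r \<in> C" using assms by simp
  have "y \<sqsubseteq> (x \<leadsto> ?r)" "z \<sqsubseteq> (x \<leadsto> ?r)"
    using assms r residuation[of y x ?r] residuation[of z x ?r] join_ub1[of "x \<otimes> y" "x \<otimes> z"]
      join_ub2[of "x \<otimes> y" "x \<otimes> z"] by (simp_all add: mult_comm)
  then have "y \<squnion> z \<sqsubseteq> (x \<leadsto> ?r)" using assms r join_lub by simp
  then have "x \<otimes> (y \<squnion> z) \<sqsubseteq> ?r" using assms r residuation[of "y \<squnion> z" x ?r] by (simp add: mult_comm)
  moreover have "?r \<sqsubseteq> x \<otimes> (y \<squnion> z)"
    using assms mult_mono[of x y "y \<squnion> z"] mult_mono[of x z "y \<squnion> z"] join_ub1[of y z] join_ub2[of y z]
    by (simp add: join_lub)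
  ultimately show ?thesis using assms r le_antisym by simp
qed

lemma imp_trans:
  assumes "x \<in> C" "y \<in> C" "z \<in> C"
  shows "(x \<leadsto> y) \<otimes> (y \<leadsto> z) \<sqsubseteq> (x \<leadsto> z)"
proof -
  have e: "(x \<leadsto> y) \<otimes> (y \<leadsto> z) \<otimes> x = (y \<leadsto> z) \<otimes> (x \<otimes> (x \<leadsto> y))"
    using assms by (metis imp_in mult_assoc mult_comm)
  have "(y \<leadsto> z) \<otimes> (x \<otimes> (x \<leadsto> y)) \<sqsubseteq> (y \<leadsto> z) \<otimes> y" using assms by (simp add: modus_ponens mult_mono)
  moreover have "(y \<leadsto> z) \<otimes> y \<sqsubseteq> z" using assms modus_ponens[of y z] by (simp add: mult_comm)
  ultimately have "(x \<leadsto> y) \<otimes> (y \<leadsto> z) \<otimes> x \<sqsubseteq> z" unfolding e using assms le_trans by (meson imp_in mult_in)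
  then show ?thesis using assms residuation by simp
qed

lemma imp_antimono:
  assumes "x \<in> C" "y \<in> C" "z \<in> C" "x \<sqsubseteq> y"
  shows "(y \<leadsto> z) \<sqsubseteq> (x \<leadsto> z)"
proof -
  have "(y \<leadsto> z) \<otimes> x \<sqsubseteq> (y \<leadsto> z) \<otimes> y" using assms by (simp add: mult_mono)
  moreover have "(y \<leadsto> z) \<otimes> y \<sqsubseteq> z" using assms modus_ponens[of y z] by (simp add: mult_comm)
  ultimately have "(y \<leadsto> z) \<otimes> x \<sqsubseteq> z" using assms le_trans by (meson imp_in mult_in)
  then show ?thesis using assms residuation by simp
qed

definition is_filter :: "'a set \<Rightarrow> bool" where
  "is_filter F \<longleftrightarrow> F \<subseteq> C \<and> \<one> \<in> F \<and> (\<forall>x\<in>F. \<forall>y\<in>F. x \<otimes> y \<in> F) \<and>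
     (\<forall>x\<in>F. \<forall>y\<in>C. x \<sqsubseteq> y \<longrightarrow> y \<in> F)"

lemma filter_subset: "is_filter F \<Longrightarrow> x \<in> F \<Longrightarrow> x \<in> C"
  and filter_top: "is_filter F \<Longrightarrow> \<one> \<in> F"
  and filter_mult: "is_filter F \<Longrightarrow> x \<in> F \<Longrightarrow> y \<in> F \<Longrightarrow> x \<otimes> y \<in> F"
  and filter_up: "is_filter F \<Longrightarrow> x \<in> F \<Longrightarrow> y \<in> C \<Longrightarrow> x \<sqsubseteq> y \<Longrightarrow> y \<in> F"
  by (auto simp: is_filter_def)

fun mpow :: "'a \<Rightarrow> nat \<Rightarrow> 'a" where
  "mpow a 0 = \<one>"
| "mpow a (Suc k) = a \<otimes> mpow a k"

lemma mpow_in [simp]: "a \<in> C \<Longrightarrow> mpow a k \<in> C"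
  by (induction k) auto

lemma mpow_add: "a \<in> C \<Longrightarrow> mpow a (k + m) = mpow a k \<otimes> mpow a m"
  by (induction k) (auto simp: mult_assoc)

lemma join_mpow_eq_top:
  assumes "a \<in> C" "b \<in> C" "a \<squnion> b = \<one>"
  shows "mpow a k \<squnion> b = \<one>"
proof (induction k)
  case 0
  then show ?case using assms by (simp add: top_join)
next
  case (Suc k)
  let ?p = "mpow a k" and ?R = "a \<otimes> mpow a k \<squnion> b"
  have p: "?p \<in> C" and R: "?R \<in> C" using assms by simp_all
  have expand: "\<one> = (?p \<otimes> a \<squnion> ?p \<otimes> b) \<squnion> (a \<squnion> b) \<otimes> b"
  proof -
    have "\<one> = (a \<squnion> b) \<otimes> (?p \<squnion> b)" using Suc assms by simp
    also have "\<dots> = (a \<squnion> b) \<otimes> ?p \<squnion> (a \<squnion> b) \<otimes> b" using assms p by (simp add: mult_join_distrib)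
    also have "(a \<squnion> b) \<otimes> ?p = ?p \<otimes> a \<squnion> ?p \<otimes> b"
      using assms(1,2) p mult_comm[of "a \<squnion> b" ?p] mult_join_distrib[OF p assms(1,2)] by simp
    finally show ?thesis .
  qed
  have bR: "b \<sqsubseteq> ?R" using assms join_ub2[of "a \<otimes> mpow a k" b] by simp
  have "?p \<otimes> a \<sqsubseteq> ?R" using assms p join_ub1[of "a \<otimes> mpow a k" b] by (simp add: mult_comm)
  moreover have "?p \<otimes> b \<sqsubseteq> ?R" using assms p R mult_le2[of ?p b] bR le_trans by (meson mult_in)
  moreover have "(a \<squnion> b) \<otimes> b \<sqsubseteq> ?R"
    using assms R mult_le2[of "a \<squnion> b" b] bR le_trans by (meson mult_in join_in)
  ultimately have "\<one> \<sqsubseteq> ?R" using expand assms p R by (metis join_lub join_in mult_in)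
  then show ?case using R top_le by simp
qed

lemma join_mpows_eq_top: "a \<in> C \<Longrightarrow> b \<in> C \<Longrightarrow> a \<squnion> b = \<one> \<Longrightarrow> mpow a k \<squnion> mpow b m = \<one>"
  by (metis join_comm join_mpow_eq_top mpow_in)

definition filter_generated :: "'a set \<Rightarrow> 'a \<Rightarrow> 'a set" where
  "filter_generated F a = {z \<in> C. \<exists>f\<in>F. \<exists>k. f \<otimes> mpow a k \<sqsubseteq> z}"

lemma is_filter_filter_generated:
  assumes F: "is_filter F" and a: "a \<in> C"
  shows "is_filter (filter_generated F a)"
  unfolding is_filter_def
proof (intro conjI ballI impI)
  show "filter_generated F a \<subseteq> C" by (auto simp: filter_generated_def)
  show "\<one> \<in> filter_generated F a"
    unfolding filter_generated_def using F filter_top[OF F]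
    by (intro CollectI conjI bexI[of _ \<one>] exI[of _ 0]) simp_all
next
  fix x y assume "x \<in> filter_generated F a" "y \<in> filter_generated F a"
  then obtain f k g m where f: "f \<in> F" "f \<otimes> mpow a k \<sqsubseteq> x" "x \<in> C"
    and g: "g \<in> F" "g \<otimes> mpow a m \<sqsubseteq> y" "y \<in> C"
    by (auto simp: filter_generated_def)
  have fC: "f \<in> C" "g \<in> C" using f g F filter_subset by auto
  have "(f \<otimes> g) \<otimes> mpow a (k + m) = (f \<otimes> mpow a k) \<otimes> (g \<otimes> mpow a m)"
    using fC a by (simp add: mpow_add) (metis mult_assoc mult_comm mult_in mpow_in)
  moreover have "(f \<otimes> mpow a k) \<otimes> (g \<otimes> mpow a m) \<sqsubseteq> x \<otimes> y"
    using fC a f g by (intro mult_mono2) simp_all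
  ultimately show "x \<otimes> y \<in> filter_generated F a"
    unfolding filter_generated_def using f g fC F filter_mult
    by (intro CollectI conjI bexI[of _ "f \<otimes> g"] exI[of _ "k + m"]) simp_all
next
  fix x y assume x: "x \<in> filter_generated F a" and y: "y \<in> C" and xy: "x \<sqsubseteq> y"
  from x obtain f k where f: "f \<in> F" "f \<otimes> mpow a k \<sqsubseteq> x" "x \<in> C"
    by (auto simp: filter_generated_def)
  have "f \<otimes> mpow a k \<sqsubseteq> y" using f xy y a F filter_subset le_trans by (meson mult_in mpow_in)
  then show "y \<in> filter_generated F a" unfolding filter_generated_def using f y by blast
qed

lemma filter_generated_contains:
  assumes F: "is_filter F" and a: "a \<in> C"
  shows "insert a F \<subseteq> filter_generated F a"
proof -
  have "\<one> \<otimes> mpow a 1 \<sqsubseteq> a" using a by simp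
  moreover have "x \<otimes> mpow a 0 \<sqsubseteq> x" if "x \<in> F" for x using that F filter_subset by simp
  ultimately show ?thesis
    unfolding filter_generated_def using a F filter_top filter_subset by blast
qed

lemma maximal_filter_avoiding:
  assumes c: "c \<in> C" "c \<noteq> \<one>"
  shows "\<exists>M. is_filter M \<and> c \<notin> M \<and> (\<forall>G. is_filter G \<and> c \<notin> G \<and> M \<subseteq> G \<longrightarrow> G = M)"
proof -
  let ?A = "{G. is_filter G \<and> c \<notin> G}"
  have "\<exists>U\<in>?A. \<forall>X\<in>K. X \<subseteq> U" if K: "K \<in> chains ?A" for K
  proof (cases "K = {}")
    case True
    have "is_filter {\<one>}" unfolding is_filter_def using top_le by auto
    then show ?thesis using True c by auto
  next
    case False
    have KA: "K \<subseteq> ?A" and ch: "\<forall>X\<in>K. \<forall>Y\<in>K. X \<subseteq> Y \<or> Y \<subseteq> X"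
      using K unfolding chains_def chain_subset_def by auto
    have "is_filter (\<Union>K)" unfolding is_filter_def
    proof (intro conjI ballI impI)
      show "\<Union>K \<subseteq> C" using KA filter_subset by blast
      show "\<one> \<in> \<Union>K" using KA False filter_top by blast
    next
      fix x y assume "x \<in> \<Union>K" "y \<in> \<Union>K"
      then obtain X Y where "X \<in> K" "Y \<in> K" "x \<in> X" "y \<in> Y" by auto
      then show "x \<otimes> y \<in> \<Union>K" using ch KA filter_mult
        by (metis (no_types, lifting) UnionI mem_Collect_eq subsetD subset_iff)
    next
      fix x y assume "x \<in> \<Union>K" "y \<in> C" "x \<sqsubseteq> y"
      then show "y \<in> \<Union>K" using KA filter_up by blast
    qed
    moreover have "c \<notin> \<Union>K" using KA by blast
    ultimately show ?thesis by blast
  qed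
  then obtain M where "M \<in> ?A" "\<forall>X\<in>?A. M \<subseteq> X \<longrightarrow> X = M" using Zorn_Lemma2[of ?A] by blast
  then show ?thesis by blast
qed

text \<open>If \<open>a, b \<notin> M\<close>, maximality puts \<open>c\<close> into the filters generated by \<open>M\<close> with \<open>a\<close> and
  with \<open>b\<close>, so \<open>h \<otimes> a\<^sup>k \<sqsubseteq> c\<close> and \<open>h \<otimes> b\<^sup>m \<sqsubseteq> c\<close> for some \<open>h \<in> M\<close>; but \<open>a\<^sup>k \<squnion> b\<^sup>m = \<one>\<close>.\<close>

lemma maximal_filter_prime:
  assumes M: "is_filter M" "c \<notin> M" "\<forall>G. is_filter G \<and> c \<notin> G \<and> M \<subseteq> G \<longrightarrow> G = M"
    and c: "c \<in> C" and ab: "a \<in> C" "b \<in> C" "a \<squnion> b = \<one>"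
  shows "a \<in> M \<or> b \<in> M"
proof (rule ccontr)
  assume n: "\<not> (a \<in> M \<or> b \<in> M)"
  have "c \<in> filter_generated M a" "c \<in> filter_generated M b"
    using M is_filter_filter_generated filter_generated_contains n ab by blast+
  then obtain f k g m where f: "f \<in> M" "f \<otimes> mpow a k \<sqsubseteq> c" and g: "g \<in> M" "g \<otimes> mpow b m \<sqsubseteq> c"
    by (auto simp: filter_generated_def)
  have fC: "f \<in> C" "g \<in> C" using f g M filter_subset by auto
  let ?h = "f \<otimes> g"
  have hM: "?h \<in> M" using f g M filter_mult by auto
  have hC: "?h \<in> C" using fC by simp
  have "mpow a k \<sqsubseteq> (f \<leadsto> c)" using f fC ab c residuation[of "mpow a k" f c] by (simp add: mult_comm)
  moreover have "(f \<leadsto> c) \<sqsubseteq> (?h \<leadsto> c)" using fC c by (simp add: imp_antimono mult_le1)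
  ultimately have a_le: "mpow a k \<sqsubseteq> (?h \<leadsto> c)" using fC c ab le_trans by (meson imp_in mult_in mpow_in)
  have "mpow b m \<sqsubseteq> (g \<leadsto> c)" using g fC ab c residuation[of "mpow b m" g c] by (simp add: mult_comm)
  moreover have "(g \<leadsto> c) \<sqsubseteq> (?h \<leadsto> c)" using fC c by (simp add: imp_antimono mult_le2)
  ultimately have b_le: "mpow b m \<sqsubseteq> (?h \<leadsto> c)" using fC c ab le_trans by (meson imp_in mult_in mpow_in)
  have "mpow a k \<squnion> mpow b m \<sqsubseteq> (?h \<leadsto> c)" using a_le b_le ab c hC join_lub by simp
  then have "\<one> \<sqsubseteq> (?h \<leadsto> c)" using join_mpows_eq_top[OF ab] by simp
  then have "?h \<sqsubseteq> c" using hC c top_le imp_eq_top_iff by (metis imp_in)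
  then show False using hM c M filter_up by blast
qed

end

text \<open>Modulo a prime filter an NM algebra becomes a chain (prelinearity), in which every
  product is either \<open>\<zero>\<close> or the meet of its factors (the NM law).\<close>

locale prime_filter = nm_alg +
  fixes M
  assumes filter: "is_filter M" and proper: "\<zero> \<notin> M"
    and prime: "a \<in> C \<Longrightarrow> b \<in> C \<Longrightarrow> a \<squnion> b = \<one> \<Longrightarrow> a \<in> M \<or> b \<in> M"
begin

definition M_le :: "'a \<Rightarrow> 'a \<Rightarrow> bool" (infix "\<preceq>" 50) where
  "u \<preceq> v \<longleftrightarrow> (u \<leadsto> v) \<in> M"

definition M_eq :: "'a \<Rightarrow> 'a \<Rightarrow> bool" (infix "\<approx>" 50) where
  "u \<approx> v \<longleftrightarrow> u \<preceq> v \<and> v \<preceq> u"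

lemma le_imp_M_le: "u \<in> C \<Longrightarrow> v \<in> C \<Longrightarrow> u \<sqsubseteq> v \<Longrightarrow> u \<preceq> v"
  unfolding M_le_def using imp_eq_top_iff[of u v] filter_top[OF filter] by simp

lemma M_le_refl [simp]: "u \<in> C \<Longrightarrow> u \<preceq> u"
  by (simp add: le_imp_M_le)

lemma M_le_trans: "u \<in> C \<Longrightarrow> v \<in> C \<Longrightarrow> w \<in> C \<Longrightarrow> u \<preceq> v \<Longrightarrow> v \<preceq> w \<Longrightarrow> u \<preceq> w"
  unfolding M_le_def by (meson filter filter_mult filter_up imp_in imp_trans mult_in)

lemma M_le_total: "u \<in> C \<Longrightarrow> v \<in> C \<Longrightarrow> u \<preceq> v \<or> v \<preceq> u"
  unfolding M_le_def using prime prelinearity by simp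

lemma M_le_neg: "u \<in> C \<Longrightarrow> v \<in> C \<Longrightarrow> u \<preceq> v \<Longrightarrow> neg v \<preceq> neg u"
  unfolding M_le_def by (simp add: contraposition)

lemma bot_M_le [simp]: "u \<in> C \<Longrightarrow> \<zero> \<preceq> u"
  and M_le_top [simp]: "u \<in> C \<Longrightarrow> u \<preceq> \<one>"
  by (simp_all add: le_imp_M_le)

lemma not_top_M_le_bot: "\<not> \<one> \<preceq> \<zero>"
  unfolding M_le_def using proper by simp

lemma M_eq_refl [simp]: "u \<in> C \<Longrightarrow> u \<approx> u"
  by (simp add: M_eq_def)

lemma M_eq_trans: "u \<in> C \<Longrightarrow> v \<in> C \<Longrightarrow> w \<in> C \<Longrightarrow> u \<approx> v \<Longrightarrow> v \<approx> w \<Longrightarrow> u \<approx> w"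
  unfolding M_eq_def using M_le_trans by blast

lemma M_eq_neg: "u \<in> C \<Longrightarrow> v \<in> C \<Longrightarrow> u \<approx> v \<Longrightarrow> neg u \<approx> neg v"
  unfolding M_eq_def using M_le_neg by blast

lemma meet_M_eq:
  assumes "u \<in> C" "v \<in> C" "u \<preceq> v"
  shows "u \<sqinter> v \<approx> u"
proof -
  have "(u \<leadsto> v) \<otimes> u \<sqsubseteq> u \<sqinter> v"
    using assms mult_le2[of "u \<leadsto> v" u] modus_ponens[of u v] by (simp add: meet_glb mult_comm)
  then have "(u \<leadsto> v) \<sqsubseteq> (u \<leadsto> u \<sqinter> v)" using assms residuation by simp
  then have "u \<preceq> u \<sqinter> v" using assms filter filter_up unfolding M_le_def by simp
  then show ?thesis using assms by (simp add: M_eq_def le_imp_M_le meet_le1)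
qed

lemma join_M_eq:
  assumes "u \<in> C" "v \<in> C" "u \<preceq> v"
  shows "u \<squnion> v \<approx> v"
proof -
  have "(u \<leadsto> v) \<otimes> (u \<squnion> v) = (u \<leadsto> v) \<otimes> u \<squnion> (u \<leadsto> v) \<otimes> v"
    using assms by (simp add: mult_join_distrib)
  also have "\<dots> \<sqsubseteq> v"
    using assms mult_le2[of "u \<leadsto> v" v] modus_ponens[of u v] by (simp add: join_lub mult_comm)
  finally have "(u \<leadsto> v) \<sqsubseteq> (u \<squnion> v \<leadsto> v)" using assms residuation[of "u \<leadsto> v" "u \<squnion> v" v] by simp
  then have "u \<squnion> v \<preceq> v" using assms filter filter_up unfolding M_le_def by simp
  then show ?thesis using assms by (simp add: M_eq_def le_imp_M_le join_ub2)
qed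

lemma mult_M_eq_bot:
  assumes "u \<in> C" "v \<in> C" "u \<preceq> neg v"
  shows "u \<otimes> v \<approx> \<zero>"
  using assms curry[of u v \<zero>] filter filter_top by (simp add: M_eq_def M_le_def)

lemma mult_M_eq_meet:
  assumes "u \<in> C" "v \<in> C" "\<not> u \<preceq> neg v"
  shows "u \<otimes> v \<approx> u \<sqinter> v"
proof -
  have "neg (u \<otimes> v) \<in> M \<or> (u \<sqinter> v \<leadsto> u \<otimes> v) \<in> M" using assms nm_law prime by simp
  moreover have "neg (u \<otimes> v) \<notin> M" using assms curry[of u v \<zero>] by (simp add: M_le_def)
  ultimately have "u \<sqinter> v \<preceq> u \<otimes> v" unfolding M_le_def by blast
  moreover have "u \<otimes> v \<preceq> u \<sqinter> v" using assms by (simp add: le_imp_M_le meet_glb mult_le1 mult_le2)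
  ultimately show ?thesis by (simp add: M_eq_def)
qed

end

definition nm_minus_form :: form where
  "nm_minus_form = (let neg = (\<lambda>t. Imp t Bot); sq = (\<lambda>t. Conj t t);
     L = neg (sq (neg (sq (Var 0)))); R = sq (neg (sq (neg (Var 0)))) in Conj (Imp L R) (Imp R L))"

lemma eval_nm_minus_form:
  "nm_minus_algebra A \<Longrightarrow> v 0 \<in> carrier A \<Longrightarrow> eval A v nm_minus_form = top A"
  unfolding nm_minus_algebra_def nm_minus_form_def nm_biimp_def nm_neg_def nm_sq_def Let_def
  by simp

lemma eval_nm_minus_form_chain_middle: "N \<ge> 1 \<Longrightarrow> eval (nm_chain N) (\<lambda>_. N) nm_minus_form = 0"
  unfolding nm_minus_form_def Let_def by (simp add: chain_mult_def)

text \<open>For a finite negation-closed \<open>S\<close>, \<open>rank\<close> embeds the classes of elements of \<open>S\<close> in the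
  chain \<open>A/M\<close> into the integers, antisymmetrically under negation; shifted by \<open>rank \<one>\<close> it
  becomes a homomorphism into \<open>nm_chain height\<close> on the subalgebra these classes generate.\<close>

locale ranked = prime_filter +
  fixes S
  assumes S_finite: "finite S" and S_carrier: "S \<subseteq> C" and bot_S: "\<zero> \<in> S" and top_S: "\<one> \<in> S"
    and S_neg: "s \<in> S \<Longrightarrow> neg s \<in> S"
begin

definition below_count :: "'a \<Rightarrow> nat" where
  "below_count u = card {s\<in>S. s \<preceq> u}"

definition rank :: "'a \<Rightarrow> int" where
  "rank u = int (below_count u) - int (below_count (neg u))"

definition S_class :: "'a \<Rightarrow> bool" where
  "S_class u \<longleftrightarrow> u \<in> C \<and> (\<exists>s\<in>S. u \<approx> s)"

lemma below_count_mono: "u \<in> C \<Longrightarrow> v \<in> C \<Longrightarrow> u \<preceq> v \<Longrightarrow> below_count u \<le> below_count v"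
proof -
  assume "u \<in> C" "v \<in> C" "u \<preceq> v"
  then have "{s\<in>S. s \<preceq> u} \<subseteq> {s\<in>S. s \<preceq> v}" using S_carrier M_le_trans by blast
  then show ?thesis unfolding below_count_def using S_finite by (intro card_mono) auto
qed

lemma below_count_less:
  assumes u: "S_class u" and v: "v \<in> C" and n: "\<not> u \<preceq> v"
  shows "below_count v < below_count u"
proof -
  obtain s where s: "s \<in> S" "u \<approx> s" "u \<in> C" using u S_class_def by auto
  have sC: "s \<in> C" using s S_carrier by auto
  have "v \<preceq> u" using M_le_total[OF s(3) v] n by auto
  then have "{s\<in>S. s \<preceq> v} \<subseteq> {s\<in>S. s \<preceq> u}" using S_carrier M_le_trans v s(3) by blast
  moreover have "s \<in> {s\<in>S. s \<preceq> u}" using s M_eq_def by auto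
  moreover have "\<not> s \<preceq> v" using s sC v n M_le_trans[of u s v] M_eq_def by blast
  ultimately have "{s\<in>S. s \<preceq> v} \<subset> {s\<in>S. s \<preceq> u}" by blast
  then show ?thesis unfolding below_count_def using S_finite by (intro psubset_card_mono) auto
qed

lemma S_class_in: "S_class u \<Longrightarrow> u \<in> C"
  by (simp add: S_class_def)

lemma S_class_of_mem: "s \<in> S \<Longrightarrow> S_class s"
  using S_carrier M_eq_refl unfolding S_class_def by blast

lemma S_class_M_eq: "S_class u \<Longrightarrow> v \<in> C \<Longrightarrow> v \<approx> u \<Longrightarrow> S_class v"
  unfolding S_class_def using S_carrier M_eq_trans by blast

lemma S_class_neg: "S_class u \<Longrightarrow> S_class (neg u)"
proof -
  assume "S_class u"
  then obtain s where "s \<in> S" "u \<approx> s" "u \<in> C" by (auto simp: S_class_def)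
  then show ?thesis using M_eq_neg[of u s] S_carrier S_neg by (auto simp: S_class_def)
qed

lemma rank_neg: "u \<in> C \<Longrightarrow> rank (neg u) = - rank u"
  by (simp add: rank_def)

lemma rank_mono: "u \<in> C \<Longrightarrow> v \<in> C \<Longrightarrow> u \<preceq> v \<Longrightarrow> rank u \<le> rank v"
  unfolding rank_def using below_count_mono[of u v] below_count_mono[of "neg v" "neg u"] M_le_neg
  by simp

lemma M_le_iff_rank_le:
  assumes u: "S_class u" and v: "v \<in> C"
  shows "u \<preceq> v \<longleftrightarrow> rank u \<le> rank v"
proof
  assume "rank u \<le> rank v"
  show "u \<preceq> v"
  proof (rule ccontr)
    assume n: "\<not> u \<preceq> v"
    have uC: "u \<in> C" using u S_class_in by blast
    then have "v \<preceq> u" using M_le_total v n by blast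
    then have "below_count (neg u) \<le> below_count (neg v)" using uC v M_le_neg below_count_mono by simp
    then have "rank v < rank u" using below_count_less[OF u v n] unfolding rank_def by simp
    then show False using \<open>rank u \<le> rank v\<close> by simp
  qed
next
  assume "u \<preceq> v"
  then show "rank u \<le> rank v" using u v S_class_in rank_mono by blast
qed

lemma rank_M_eq: "u \<in> C \<Longrightarrow> v \<in> C \<Longrightarrow> u \<approx> v \<Longrightarrow> rank u = rank v"
  unfolding M_eq_def using rank_mono[of u v] rank_mono[of v u] by simp

lemma rank_top_pos: "rank \<one> > 0"
proof -
  have "rank \<zero> < rank \<one>"
    using M_le_iff_rank_le[OF S_class_of_mem[OF top_S], of \<zero>] not_top_M_le_bot by simp
  then show ?thesis using rank_neg[of \<one>] by simp
qed

lemma rank_bounds: "u \<in> C \<Longrightarrow> - rank \<one> \<le> rank u \<and> rank u \<le> rank \<one>"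
  using rank_mono[of \<zero> u] rank_mono[of u \<one>] rank_neg[of \<one>] by simp

definition height :: nat where
  "height = nat (rank \<one>)"

definition level :: "'a \<Rightarrow> nat" where
  "level u = nat (rank u + rank \<one>)"

lemma height_int: "int height = rank \<one>"
  using rank_top_pos by (simp add: height_def)

lemma height_pos: "height \<ge> 1"
  using rank_top_pos height_int by linarith

lemma level_int: "u \<in> C \<Longrightarrow> int (level u) = rank u + rank \<one>"
  using rank_bounds[of u] by (simp add: level_def)

lemma level_le: "u \<in> C \<Longrightarrow> level u \<le> 2 * height"
proof -
  assume u: "u \<in> C"
  have "int (level u) \<le> int (2 * height)" using level_int[OF u] height_int rank_bounds[OF u] by simp
  then show ?thesis by linarith
qed

lemma level_bot: "level \<zero> = 0"
proof -
  have "int (level \<zero>) = 0" using level_int[of \<zero>] rank_neg[of \<one>] by simp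
  then show ?thesis by simp
qed

lemma level_top: "level \<one> = 2 * height"
proof -
  have "int (level \<one>) = int (2 * height)" using level_int[of \<one>] height_int by simp
  then show ?thesis by linarith
qed

lemma level_neg: "u \<in> C \<Longrightarrow> level (neg u) = 2 * height - level u"
proof -
  assume u: "u \<in> C"
  have "int (level (neg u)) = int (2 * height) - int (level u)"
    using level_int[OF u] level_int[of "neg u"] u rank_neg[OF u] height_int by simp
  then show ?thesis by linarith
qed

lemma M_le_iff_level_le: "S_class u \<Longrightarrow> v \<in> C \<Longrightarrow> u \<preceq> v \<longleftrightarrow> level u \<le> level v"
  using M_le_iff_rank_le[of u v] level_int[of u] level_int[of v] S_class_in[of u] by linarith

lemma level_M_eq: "u \<in> C \<Longrightarrow> v \<in> C \<Longrightarrow> u \<approx> v \<Longrightarrow> level u = level v"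
  unfolding level_def using rank_M_eq by presburger

lemma level_meet:
  assumes u: "S_class u" and v: "S_class v"
  shows "S_class (u \<sqinter> v) \<and> level (u \<sqinter> v) = min (level u) (level v)"
proof -
  have uC: "u \<in> C" and vC: "v \<in> C" using u v S_class_in by blast+
  have "S_class (u \<sqinter> v) \<and> level (u \<sqinter> v) = level u" if "S_class u" "S_class v" "u \<in> C" "v \<in> C"
    "u \<preceq> v" for u v
    using that meet_M_eq[of u v] S_class_M_eq[of u "u \<sqinter> v"] level_M_eq[of "u \<sqinter> v" u] by simp
  moreover have "u \<preceq> v \<longleftrightarrow> level u \<le> level v" "v \<preceq> u \<longleftrightarrow> level v \<le> level u"
    using M_le_iff_level_le u v uC vC by blast+
  ultimately show ?thesis using u v uC vC M_le_total[OF uC vC] meet_comm[OF uC vC] by (metis min_def)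
qed

lemma level_join:
  assumes u: "S_class u" and v: "S_class v"
  shows "S_class (u \<squnion> v) \<and> level (u \<squnion> v) = max (level u) (level v)"
proof -
  have uC: "u \<in> C" and vC: "v \<in> C" using u v S_class_in by blast+
  have "S_class (u \<squnion> v) \<and> level (u \<squnion> v) = level v" if "S_class u" "S_class v" "u \<in> C" "v \<in> C"
    "u \<preceq> v" for u v
    using that join_M_eq[of u v] S_class_M_eq[of v "u \<squnion> v"] level_M_eq[of "u \<squnion> v" v] by simp
  moreover have "u \<preceq> v \<longleftrightarrow> level u \<le> level v" "v \<preceq> u \<longleftrightarrow> level v \<le> level u"
    using M_le_iff_level_le u v uC vC by blast+
  ultimately show ?thesis using u v uC vC M_le_total[OF uC vC] join_comm[OF uC vC] by (metis max_def)
qed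

lemma level_mult:
  assumes u: "S_class u" and v: "S_class v"
  shows "S_class (u \<otimes> v) \<and> level (u \<otimes> v) = chain_mult height (level u) (level v)"
proof -
  have uC: "u \<in> C" and vC: "v \<in> C" using u v S_class_in by blast+
  have below_neg: "u \<preceq> neg v \<longleftrightarrow> level u + level v \<le> 2 * height"
    using M_le_iff_level_le[OF u, of "neg v"] level_neg[OF vC] level_le[OF vC] vC by auto
  show ?thesis
  proof (cases "u \<preceq> neg v")
    case True
    have e: "u \<otimes> v \<approx> \<zero>" using mult_M_eq_bot[OF uC vC True] .
    have "S_class (u \<otimes> v)" using S_class_M_eq[OF S_class_of_mem[OF bot_S] _ e] uC vC by simp
    moreover have "level (u \<otimes> v) = 0" using level_M_eq[OF _ _ e] uC vC level_bot by simp
    ultimately show ?thesis using True below_neg by (simp add: chain_mult_def)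
  next
    case False
    have e: "u \<otimes> v \<approx> u \<sqinter> v" using mult_M_eq_meet[OF uC vC False] .
    have m: "S_class (u \<sqinter> v) \<and> level (u \<sqinter> v) = min (level u) (level v)" using level_meet[OF u v] .
    have "S_class (u \<otimes> v)" using S_class_M_eq[of "u \<sqinter> v" "u \<otimes> v"] m e uC vC by simp
    moreover have "level (u \<otimes> v) = min (level u) (level v)" using level_M_eq[OF _ _ e] uC vC m by simp
    ultimately show ?thesis using False below_neg by (simp add: chain_mult_def)
  qed
qed

lemma level_imp:
  assumes u: "S_class u" and v: "S_class v"
  shows "S_class (u \<leadsto> v) \<and> level (u \<leadsto> v) = 2 * height - chain_mult height (level u) (2 * height - level v)"
proof -
  have uC: "u \<in> C" and vC: "v \<in> C" using u v S_class_in by blast+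
  have m: "S_class (u \<otimes> neg v) \<and> level (u \<otimes> neg v) = chain_mult height (level u) (level (neg v))"
    using level_mult[OF u S_class_neg[OF v]] .
  then show ?thesis using imp_via_neg[OF uC vC] S_class_neg level_neg level_neg[OF vC] uC vC by simp
qed

lemma level_eval:
  "(\<forall>i\<in>vars t. S_class (w i)) \<Longrightarrow>
    S_class (eval A w t) \<and> level (eval A w t) = eval (nm_chain height) (\<lambda>i. level (w i)) t"
  by (induction t)
    (simp_all add: S_class_of_mem bot_S top_S level_bot level_top level_meet level_join level_mult level_imp)

text \<open>At the negation fixpoint the NM-minus axiom evaluates to \<open>0\<close> in the chain.\<close>

lemma level_ne_height:
  assumes "nm_minus_algebra A" and u: "S_class u"
  shows "level u \<noteq> height"
proof
  assume "level u = height"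
  moreover have "level (eval A (\<lambda>_. u) nm_minus_form) = eval (nm_chain height) (\<lambda>_. level u) nm_minus_form"
    using level_eval[of nm_minus_form "\<lambda>_. u"] u by simp
  moreover have "eval A (\<lambda>_. u) nm_minus_form = \<one>"
    using assms eval_nm_minus_form[of A "\<lambda>_. u"] S_class_in by simp
  ultimately have "2 * height = 0"
    using level_top eval_nm_minus_form_chain_middle[OF height_pos] by simp
  then show False using height_pos by simp
qed

end

lemma (in nm_alg) prime_filter_separating:
  assumes x: "x \<in> C" and y: "y \<in> C" and "\<not> x \<sqsubseteq> y"
  obtains M where "prime_filter A M" "(x \<leadsto> y) \<notin> M"
proof -
  let ?c = "x \<leadsto> y"
  have c: "?c \<in> C" "?c \<noteq> \<one>" using assms imp_eq_top_iff by auto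
  then obtain M where M: "is_filter M" "?c \<notin> M" "\<forall>G. is_filter G \<and> ?c \<notin> G \<and> M \<subseteq> G \<longrightarrow> G = M"
    using maximal_filter_avoiding by blast
  have "\<zero> \<notin> M" using M c filter_up by fastforce
  then have "prime_filter A M"
    using M c maximal_filter_prime by unfold_locales blast+
  then show ?thesis using M that by blast
qed

lemma eval_cong: "(\<forall>i\<in>vars t. v i = v' i) \<Longrightarrow> eval A v t = eval A v' t"
  by (induction t) auto

lemma eval_in_carrier:
  assumes "nm_algebra A" "\<forall>i. v i \<in> carrier A"
  shows "eval A v t \<in> carrier A"
proof -
  interpret nm_alg A by unfold_locales (rule assms(1))
  show ?thesis using assms(2) by (induction t) auto
qed

lemma eval_nm_chain_in_carrier:
  "N \<ge> 1 \<Longrightarrow> \<forall>i. v i \<in> carrier (nm_chain N) \<Longrightarrow> eval (nm_chain N) v t \<in> carrier (nm_chain N)"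
  using eval_in_carrier nm_minus_algebra_nm_chain nm_minus_algebra_def by blast

definition chain_valuations :: "nat \<Rightarrow> (nat \<times> (nat \<Rightarrow> nat)) set" where
  "chain_valuations n = {(N, v). 1 \<le> N \<and> N \<le> 2*n+2 \<and> (\<forall>i. v i \<in> carrier (nm_chain N)) \<and> (\<forall>i\<ge>n. v i = 0)}"

text \<open>Rank modulo a prime filter separating the two values, with \<open>S\<close> consisting of \<open>\<zero>, \<one>\<close>
  and the values of the variables and their negations; then \<open>height \<le> |S| \<le> 2n + 2\<close>.\<close>

theorem nm_minus_counterexample_in_chain:
  assumes A: "nm_minus_algebra A" and w: "\<forall>i. w i \<in> carrier A"
    and a: "in_vars n a" and b: "in_vars n b"
    and not_le: "\<not> nm_le A (eval A w a) (eval A w b)"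
  shows "\<exists>N v. (N, v) \<in> chain_valuations n \<and> eval (nm_chain N) v b < eval (nm_chain N) v a"
proof -
  have nmA: "nm_algebra A" using A nm_minus_algebra_def by blast
  interpret nm_alg A by unfold_locales (rule nmA)
  let ?x = "eval A w a" and ?y = "eval A w b"
  have xC: "?x \<in> C" and yC: "?y \<in> C" using eval_in_carrier[OF nmA w] by auto
  obtain M where M: "prime_filter A M" "(?x \<leadsto> ?y) \<notin> M"
    using prime_filter_separating[OF xC yC not_le] by blast
  let ?S = "{\<zero>, \<one>} \<union> w ` {..<n} \<union> (\<lambda>i. neg (w i)) ` {..<n}"
  interpret ranked A M ?S
    using M(1) w by unfold_locales (auto simp: prime_filter_def prime_filter_axioms_def)
  have wS: "i < n \<Longrightarrow> S_class (w i)" for i using S_class_of_mem by simp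
  have ha: "S_class ?x \<and> level ?x = eval (nm_chain height) (\<lambda>i. level (w i)) a"
    using level_eval[of a w] wS a unfolding in_vars_def by auto
  have hb: "level ?y = eval (nm_chain height) (\<lambda>i. level (w i)) b"
    using level_eval[of b w] wS b unfolding in_vars_def by auto
  have "level ?y < level ?x" using M(2) M_le_iff_level_le[of ?x ?y] ha yC by (simp add: M_le_def)
  define v where "v i = (if i < n then level (w i) else 0)" for i
  have "eval (nm_chain height) v a = eval (nm_chain height) (\<lambda>i. level (w i)) a"
    "eval (nm_chain height) v b = eval (nm_chain height) (\<lambda>i. level (w i)) b"
    using a b unfolding in_vars_def v_def by (intro eval_cong; auto)+
  moreover have "v i \<in> carrier (nm_chain height)" for i
    using level_le[of "w i"] w level_ne_height[OF A wS] height_pos unfolding v_def by simp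
  moreover have "height \<le> 2 * n + 2"
  proof -
    have "int height \<le> int (below_count \<one>)" using height_int unfolding rank_def by simp
    also have "below_count \<one> \<le> card ?S" unfolding below_count_def by (rule card_mono) auto
    also have "card ?S \<le> card {\<zero>, \<one>} + card (w ` {..<n}) + card ((\<lambda>i. neg (w i)) ` {..<n})"
      using card_Un_le[of "{\<zero>, \<one>} \<union> w ` {..<n}" "(\<lambda>i. neg (w i)) ` {..<n}"]
        card_Un_le[of "{\<zero>, \<one>}" "w ` {..<n}"] by linarith
    also have "\<dots> \<le> 2 + n + n"
      using card_image_le[of "{..<n}" w] card_image_le[of "{..<n}" "\<lambda>i. neg (w i)"]
        card_insert_le_m1[of 2 "{\<one>}" \<zero>] by simp
    finally show ?thesis by linarith
  qed
  ultimately show ?thesis using height_pos \<open>level ?y < level ?x\<close> ha hb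
    by (intro exI[of _ height] exI[of _ v]) (auto simp: chain_valuations_def v_def)
qed

lemma nm_equiv_chain_eval_eq:
  "nm_equiv a b \<Longrightarrow> (N, v) \<in> chain_valuations n \<Longrightarrow> eval (nm_chain N) v a = eval (nm_chain N) v b"
  unfolding nm_equiv_def chain_valuations_def using nm_minus_algebra_nm_chain by auto

lemma nm_equiv_iff_chain_eval:
  assumes a: "in_vars n a" and b: "in_vars n b"
  shows "nm_equiv a b \<longleftrightarrow> (\<forall>(N, v) \<in> chain_valuations n. eval (nm_chain N) v a = eval (nm_chain N) v b)"
proof
  assume "nm_equiv a b"
  then show "\<forall>(N, v) \<in> chain_valuations n. eval (nm_chain N) v a = eval (nm_chain N) v b"
    using nm_equiv_chain_eval_eq by blast
next
  assume h: "\<forall>(N, v) \<in> chain_valuations n. eval (nm_chain N) v a = eval (nm_chain N) v b"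
  show "nm_equiv a b" unfolding nm_equiv_def
  proof (intro allI impI)
    fix A :: "nat nm_ops" and w :: "nat \<Rightarrow> nat"
    assume A: "nm_minus_algebra A" and w: "\<forall>i. w i \<in> carrier A"
    have nmA: "nm_algebra A" using A nm_minus_algebra_def by blast
    interpret nm_alg A by unfold_locales (rule nmA)
    have "nm_le A (eval A w a) (eval A w b)" "nm_le A (eval A w b) (eval A w a)"
      using nm_minus_counterexample_in_chain[OF A w a b] nm_minus_counterexample_in_chain[OF A w b a] h
      by fastforce+
    then show "eval A w a = eval A w b" using le_antisym eval_in_carrier[OF nmA w] by blast
  qed
qed

lemma chain_mult_above_middle:
  "k \<le> 2*N \<Longrightarrow> l \<le> 2*N \<Longrightarrow> N < chain_mult N k l \<longleftrightarrow> N < k \<and> N < l"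
  by (auto simp: chain_mult_def)

lemma chain_imp_above_middle:
  "k \<le> 2*N \<Longrightarrow> l \<le> 2*N \<Longrightarrow> k \<noteq> N \<Longrightarrow> l \<noteq> N \<Longrightarrow>
    N < 2*N - chain_mult N k (2*N - l) \<longleftrightarrow> (N < k \<longrightarrow> N < l)"
  by (simp add: chain_imp_eq max_def, auto)

text \<open>Collapsing the lower and the upper half of a chain to a point is a homomorphism onto the
  two-element chain.\<close>

lemma eval_nm_chain_above_middle:
  assumes N: "N \<ge> 1" and v: "\<forall>i. v i \<in> carrier (nm_chain N)"
  shows "N < eval (nm_chain N) v t \<longleftrightarrow> bool_eval (\<lambda>i. N < v i) t"
proof (induction t)
  case (Conj a b)
  then show ?case using eval_nm_chain_in_carrier[OF N v] by (simp add: chain_mult_above_middle)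
next
  case (Imp a b)
  then show ?case using eval_nm_chain_in_carrier[OF N v] by (simp add: chain_imp_above_middle)
qed (use N in \<open>auto simp: less_max_iff_disj\<close>)

lemma nm_equiv_imp_bool_eval_eq:
  assumes "in_vars n a" "in_vars n b" "nm_equiv a b" "\<mu> \<in> bool_assignments n"
  shows "bool_eval \<mu> a = bool_eval \<mu> b"
proof -
  define v where "v i = (if \<mu> i then 2 else 0 :: nat)" for i
  have v: "(1, v) \<in> chain_valuations n"
    using assms(4) unfolding chain_valuations_def bool_assignments_def v_def by auto
  have "bool_eval \<mu> t \<longleftrightarrow> 1 < eval (nm_chain 1) v t" for t
    using eval_nm_chain_above_middle[of 1 v t] v unfolding chain_valuations_def
    by (simp add: v_def[abs_def] cong: if_cong)
  then show ?thesis using assms nm_equiv_iff_chain_eval v by fastforce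
qed

lemma finite_chain_valuations: "finite (chain_valuations n)"
proof -
  let ?V = "{v :: nat \<Rightarrow> nat. (\<forall>i. v i \<le> 4*n+4) \<and> (\<forall>i\<ge>n. v i = 0)}"
  let ?h = "\<lambda>xs i. if i < n then xs ! i else (0::nat)"
  have "?V \<subseteq> ?h ` {xs. set xs \<subseteq> {..4*n+4} \<and> length xs = n}"
  proof
    fix v assume v: "v \<in> ?V"
    have "v = ?h (map v [0..<n])" using v by (auto simp: fun_eq_iff)
    then show "v \<in> ?h ` {xs. set xs \<subseteq> {..4*n+4} \<and> length xs = n}" using v by force
  qed
  then have "finite ?V" by (rule finite_subset) (simp add: finite_lists_length_eq)
  moreover have "chain_valuations n \<subseteq> {1..2*n+2} \<times> ?V"
  proof
    fix p assume "p \<in> chain_valuations n"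
    then obtain N v where p: "p = (N, v)" "1 \<le> N" "N \<le> 2*n+2" "\<forall>i. v i \<le> 2*N" "\<forall>i\<ge>n. v i = 0"
      unfolding chain_valuations_def by auto
    then have "v i \<le> 4*n+4" for i using p(4)[rule_format, of i] by linarith
    then show "p \<in> {1..2*n+2} \<times> ?V" using p by simp
  qed
  ultimately show ?thesis by (meson finite_SigmaI finite_atLeastAtMost finite_subset)
qed

definition chain_table :: "nat \<Rightarrow> form \<Rightarrow> nat \<times> (nat \<Rightarrow> nat) \<Rightarrow> nat" where
  "chain_table n a = restrict (\<lambda>(N, v). eval (nm_chain N) v a) (chain_valuations n)"

lemma finite_chain_tables: "finite (chain_table n ` X)"
proof -
  have "eval (nm_chain N) v a \<le> 4*n+4" if "(N, v) \<in> chain_valuations n" for N v a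
    using that eval_nm_chain_in_carrier[of N v a] unfolding chain_valuations_def by auto
  then have "chain_table n ` X \<subseteq> (\<Pi>\<^sub>E p\<in>chain_valuations n. {..4*n+4})"
    unfolding chain_table_def by auto
  then show ?thesis using finite_chain_valuations by (meson finite_PiE finite_atMost finite_subset)
qed

lemma chain_table_eq_iff_nm_equiv:
  "in_vars n a \<Longrightarrow> in_vars n b \<Longrightarrow> chain_table n a = chain_table n b \<longleftrightarrow> nm_equiv a b"
  unfolding nm_equiv_iff_chain_eval chain_table_def restrict_def
  by (auto simp: fun_eq_iff split: if_splits)

lemma nm_equiv_split_by_cover:
  assumes cover: "\<And>(A :: nat nm_ops) v. nm_algebra A \<Longrightarrow> \<forall>i. v i \<in> carrier A \<Longrightarrow>
      join A (eval A v p) (eval A v q) = top A"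
  shows "nm_equiv g (Or (Conj g p) (Conj g q))"
  unfolding nm_equiv_def
proof (intro allI impI)
  fix A :: "nat nm_ops" and v :: "nat \<Rightarrow> nat" assume "nm_minus_algebra A" and v: "\<forall>i. v i \<in> carrier A"
  then have A: "nm_algebra A" by (simp add: nm_minus_algebra_def)
  interpret nm_alg A by unfold_locales (rule A)
  have "eval A v g = mult A (eval A v g) (join A (eval A v p) (eval A v q))"
    using cover[OF A v] eval_in_carrier[OF A v] by simp
  then show "eval A v g = eval A v (Or (Conj g p) (Conj g q))"
    using mult_join_distrib eval_in_carrier[OF A v] by simp
qed

lemma nm_equiv_split_by_var:
  "nm_equiv g (Or (Conj g (Imp (Imp (Var i) Bot) (Var i))) (Conj g (Imp (Var i) (Imp (Var i) Bot))))"
proof (rule nm_equiv_split_by_cover)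
  fix A :: "nat nm_ops" and v :: "nat \<Rightarrow> nat" assume A: "nm_algebra A" and "\<forall>i. v i \<in> carrier A"
  interpret nm_alg A by unfold_locales (rule A)
  show "join A (eval A v (Imp (Imp (Var i) Bot) (Var i))) (eval A v (Imp (Var i) (Imp (Var i) Bot))) = top A"
    using prelinearity[of "neg (v i)" "v i"] \<open>\<forall>i. v i \<in> carrier A\<close> by simp
qed

lemma nm_equiv_split_by_square:
  "nm_equiv g (Or (Conj g (Imp (Conj g g) Bot)) (Conj g (Imp g (Conj g g))))"
proof (rule nm_equiv_split_by_cover)
  fix A :: "nat nm_ops" and v :: "nat \<Rightarrow> nat" assume A: "nm_algebra A" and v: "\<forall>i. v i \<in> carrier A"
  interpret nm_alg A by unfold_locales (rule A)
  show "join A (eval A v (Imp (Conj g g) Bot)) (eval A v (Imp g (Conj g g))) = top A"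
    using nm_law[of "eval A v g" "eval A v g"] eval_in_carrier[OF A v] meet_idem by simp
qed

lemma idempotent_class_if_nm_equiv:
  assumes "nm_equiv g (Conj g (Imp g (Conj g g)))"
  shows "idempotent_class g"
  unfolding idempotent_class_def nm_equiv_def
proof (intro allI impI)
  fix A :: "nat nm_ops" and v :: "nat \<Rightarrow> nat" assume A': "nm_minus_algebra A" and v: "\<forall>i. v i \<in> carrier A"
  then have A: "nm_algebra A" by (simp add: nm_minus_algebra_def)
  interpret nm_alg A by unfold_locales (rule A)
  let ?x = "eval A v g"
  have x: "?x \<in> C" using eval_in_carrier[OF A v] .
  have "?x = mult A ?x (imp A ?x (mult A ?x ?x))" using assms A' v unfolding nm_equiv_def by fastforce
  then have "nm_le A ?x (mult A ?x ?x)" using modus_ponens[of ?x "mult A ?x ?x"] x by simp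
  then show "eval A v (Conj g g) = ?x" using le_antisym mult_le1[OF x x] x by simp
qed

lemma finite_bool_assignments: "finite (bool_assignments n)"
proof -
  have "bool_assignments n \<subseteq> (\<lambda>S i. i \<in> S) ` Pow {..<n}"
  proof
    fix \<mu> assume "\<mu> \<in> bool_assignments n"
    then have "{i. \<mu> i} \<in> Pow {..<n}" by (auto simp: bool_assignments_def not_le[symmetric])
    then show "\<mu> \<in> (\<lambda>S i. i \<in> S) ` Pow {..<n}" by (rule rev_image_eqI) simp
  qed
  then show ?thesis by (rule finite_subset) simp
qed

lemma join_irreducible_in_vars: "join_irreducible n g \<Longrightarrow> in_vars n g"
  by (simp add: join_irreducible_def)

text \<open>As \<open>(\<not>x \<rightarrow> x) \<or> (x \<rightarrow> \<not>x) = \<top>\<close>, a join-irreducible \<open>g\<close> equals \<open>g \<odot> (\<not>x \<rightarrow> x)\<close> or \<open>g \<odot> (x \<rightarrow> \<not>x)\<close>,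
  which forces the value of \<open>x\<close> in every Boolean model of \<open>g\<close>.\<close>

lemma join_irreducible_models_agree:
  assumes ji: "join_irreducible n g"
    and \<mu>: "\<mu> \<in> bool_assignments n" "bool_eval \<mu> g" and \<mu>': "\<mu>' \<in> bool_assignments n" "bool_eval \<mu>' g"
  shows "\<not> (\<mu> i \<and> \<not> \<mu>' i)"
proof
  assume i: "\<mu> i \<and> \<not> \<mu>' i"
  then have "i < n" using \<mu> by (auto simp: bool_assignments_def not_le[symmetric])
  define p where "p = Conj g (Imp (Imp (Var i) Bot) (Var i))"
  define q where "q = Conj g (Imp (Var i) (Imp (Var i) Bot))"
  have g: "in_vars n g" and pq: "in_vars n p" "in_vars n q"
    using join_irreducible_in_vars[OF ji] \<open>i < n\<close> by (auto simp: in_vars_def p_def q_def)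
  have "nm_equiv g p \<or> nm_equiv g q"
    using ji pq nm_equiv_split_by_var[of g i] unfolding join_irreducible_def p_def q_def by blast
  moreover have "\<not> bool_eval \<mu>' p" "\<not> bool_eval \<mu> q" using i by (simp_all add: p_def q_def)
  ultimately show False using nm_equiv_imp_bool_eval_eq[OF g] pq \<mu> \<mu>' by blast
qed

lemma join_irreducible_card_models_le_1:
  assumes "join_irreducible n g"
  shows "card {\<mu> \<in> bool_assignments n. bool_eval \<mu> g} \<le> 1"
proof -
  have "\<mu> = \<mu>'" if "\<mu> \<in> bool_assignments n" "bool_eval \<mu> g" "\<mu>' \<in> bool_assignments n" "bool_eval \<mu>' g"
    for \<mu> \<mu>'
    using join_irreducible_models_agree[OF assms] that by blast
  then show ?thesis using finite_bool_assignments by (auto simp: card_le_Suc0_iff_eq)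
qed

lemma join_irreducible_model_imp_idempotent:
  assumes ji: "join_irreducible n g" and \<mu>: "\<mu> \<in> bool_assignments n" "bool_eval \<mu> g"
  shows "idempotent_class g"
proof -
  define p where "p = Conj g (Imp (Conj g g) Bot)"
  define q where "q = Conj g (Imp g (Conj g g))"
  have g: "in_vars n g" and pq: "in_vars n p" "in_vars n q"
    using join_irreducible_in_vars[OF ji] by (auto simp: in_vars_def p_def q_def)
  have "nm_equiv g p \<or> nm_equiv g q"
    using ji pq nm_equiv_split_by_square[of g] unfolding join_irreducible_def p_def q_def by blast
  moreover have "\<not> bool_eval \<mu> p" using \<mu> by (simp add: p_def)
  ultimately have "nm_equiv g q" using nm_equiv_imp_bool_eval_eq[OF g pq(1) _ \<mu>(1)] \<mu>(2) by blast
  then show ?thesis unfolding q_def by (rule idempotent_class_if_nm_equiv)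
qed

text \<open>An idempotent without Boolean models takes only values \<open>\<le> N\<close> in \<open>nm_chain N\<close>, and
  the only idempotent there is \<open>0\<close>.\<close>

lemma join_irreducible_idempotent_has_model:
  assumes ji: "join_irreducible n g" and idem: "idempotent_class g"
  shows "\<exists>\<mu>\<in>bool_assignments n. bool_eval \<mu> g"
proof (rule ccontr)
  assume no_model: "\<not> (\<exists>\<mu>\<in>bool_assignments n. bool_eval \<mu> g)"
  have g: "in_vars n g" using join_irreducible_in_vars[OF ji] .
  have "eval (nm_chain N) v g = eval (nm_chain N) v Bot" if Nv: "(N, v) \<in> chain_valuations n" for N v
  proof -
    have N: "N \<ge> 1" and v: "\<forall>i. v i \<in> carrier (nm_chain N)" and "\<forall>i\<ge>n. v i = 0"
      using Nv by (auto simp: chain_valuations_def)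
    then have "(\<lambda>i. N < v i) \<in> bool_assignments n" by (simp add: bool_assignments_def)
    then have "\<not> N < eval (nm_chain N) v g" using no_model eval_nm_chain_above_middle[OF N v] by blast
    moreover have "eval (nm_chain N) v (Conj g g) = eval (nm_chain N) v g"
      using idem Nv unfolding idempotent_class_def by (rule nm_equiv_chain_eval_eq)
    ultimately show ?thesis by (simp add: chain_sq)
  qed
  then have "nm_equiv g Bot" using nm_equiv_iff_chain_eval[OF g, of Bot] by (auto simp: in_vars_def)
  then show False using ji by (simp add: join_irreducible_def)
qed

definition model_count :: "nat \<Rightarrow> form \<Rightarrow> real" where
  "model_count n a = real (card {\<mu> \<in> bool_assignments n. bool_eval \<mu> a})"

lemma is_chi_plus_model_count: "is_chi_plus n (model_count n)"
  unfolding is_chi_plus_def is_lattice_valuation_def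
proof (intro conjI allI impI)
  fix a b assume "in_vars n a" "in_vars n b" "nm_equiv a b"
  then have "{\<mu> \<in> bool_assignments n. bool_eval \<mu> a} = {\<mu> \<in> bool_assignments n. bool_eval \<mu> b}"
    using nm_equiv_imp_bool_eval_eq by blast
  then show "model_count n a = model_count n b" by (simp add: model_count_def)
next
  fix a b
  let ?A = "{\<mu> \<in> bool_assignments n. bool_eval \<mu> a}" and ?B = "{\<mu> \<in> bool_assignments n. bool_eval \<mu> b}"
  have "finite ?A" "finite ?B" using finite_bool_assignments by auto
  then have "card ?A + card ?B = card (?A \<union> ?B) + card (?A \<inter> ?B)" by (rule card_Un_Int)
  moreover have "{\<mu> \<in> bool_assignments n. bool_eval \<mu> (Or a b)} = ?A \<union> ?B"
    "{\<mu> \<in> bool_assignments n. bool_eval \<mu> (And a b)} = ?A \<inter> ?B" by auto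
  ultimately show "model_count n a + model_count n b = model_count n (Or a b) + model_count n (And a b)"
    unfolding model_count_def by (simp flip: of_nat_add)
next
  show "model_count n Bot = 0" by (simp add: model_count_def)
next
  fix g assume ji: "join_irreducible n g"
  show "model_count n g = (if idempotent_class g then 1 else 0)"
  proof (cases "idempotent_class g")
    case True
    then have "card {\<mu> \<in> bool_assignments n. bool_eval \<mu> g} \<noteq> 0"
      using join_irreducible_idempotent_has_model[OF ji] finite_bool_assignments by auto
    then show ?thesis
      using True join_irreducible_card_models_le_1[OF ji] unfolding model_count_def by simp
  next
    case False
    then have "{\<mu> \<in> bool_assignments n. bool_eval \<mu> g} = {}"
      using join_irreducible_model_imp_idempotent[OF ji] by blast
    then show ?thesis using False unfolding model_count_def by (simp only: card.empty) simp
  qed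
qed

definition chain_le :: "nat \<Rightarrow> form \<Rightarrow> form \<Rightarrow> bool" where
  "chain_le n x a \<longleftrightarrow> (\<forall>(N, v) \<in> chain_valuations n. eval (nm_chain N) v x \<le> eval (nm_chain N) v a)"

text \<open>The number of classes of \<open>NM\<^sup>-\<^sub>n\<close> below \<open>[a]\<close>: a measure for induction over the finite
  lattice.\<close>

definition classes_below :: "nat \<Rightarrow> form \<Rightarrow> nat" where
  "classes_below n a = card {chain_table n x | x. in_vars n x \<and> chain_le n x a}"

lemma classes_below_less:
  assumes a: "in_vars n a" and x: "in_vars n x" and le: "chain_le n x a" and ne: "\<not> nm_equiv a x"
  shows "classes_below n x < classes_below n a"
proof -
  let ?X = "{chain_table n y | y. in_vars n y \<and> chain_le n y x}"
  let ?A = "{chain_table n y | y. in_vars n y \<and> chain_le n y a}"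
  have "?X \<subseteq> ?A" using le unfolding chain_le_def by fastforce
  moreover have "chain_table n a \<in> ?A" using a unfolding chain_le_def by auto
  moreover have "chain_table n a \<notin> ?X"
  proof
    assume "chain_table n a \<in> ?X"
    then obtain y where y: "nm_equiv a y" "in_vars n y" "chain_le n y x"
      using chain_table_eq_iff_nm_equiv a by auto
    have "\<forall>(N, v) \<in> chain_valuations n. eval (nm_chain N) v a = eval (nm_chain N) v x"
      using y le nm_equiv_chain_eval_eq[OF y(1)] unfolding chain_le_def by fastforce
    then show False using ne nm_equiv_iff_chain_eval[OF a x] by blast
  qed
  ultimately have "?X \<subset> ?A" by blast
  moreover have "finite ?A" by (rule finite_subset[OF _ finite_chain_tables[of n UNIV]]) auto
  ultimately show ?thesis unfolding classes_below_def by (simp add: psubset_card_mono)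
qed

lemma join_reducible_decomposition:
  assumes a: "in_vars n a" and "\<not> nm_equiv a Bot" and "\<not> join_irreducible n a"
  obtains b c where "in_vars n b" "in_vars n c" "nm_equiv a (Or b c)"
    "classes_below n b < classes_below n a" "classes_below n c < classes_below n a"
    "classes_below n (And b c) < classes_below n a"
proof -
  obtain b c where bc: "in_vars n b" "in_vars n c" "nm_equiv a (Or b c)" "\<not> nm_equiv a b" "\<not> nm_equiv a c"
    using assms unfolding join_irreducible_def by blast
  have max: "eval (nm_chain N) v a = max (eval (nm_chain N) v b) (eval (nm_chain N) v c)"
    if "(N, v) \<in> chain_valuations n" for N v
    using nm_equiv_chain_eval_eq[OF bc(3) that] by simp
  have bc_in: "in_vars n (And b c)" using bc by (simp add: in_vars_def)
  have "\<not> nm_equiv a (And b c)"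
  proof
    assume "nm_equiv a (And b c)"
    then have "\<forall>(N, v) \<in> chain_valuations n. eval (nm_chain N) v a = eval (nm_chain N) v b"
      using max nm_equiv_chain_eval_eq by fastforce
    then show False using bc(4) nm_equiv_iff_chain_eval[OF a bc(1)] by blast
  qed
  moreover have "chain_le n b a" "chain_le n c a" "chain_le n (And b c) a"
    unfolding chain_le_def using max by auto
  ultimately show ?thesis using that bc bc_in classes_below_less[OF a] by blast
qed

lemma is_chi_plusD:
  assumes "is_chi_plus n \<nu>"
  shows "in_vars n a \<Longrightarrow> in_vars n b \<Longrightarrow> nm_equiv a b \<Longrightarrow> \<nu> a = \<nu> b"
    and "\<nu> Bot = 0"
    and "join_irreducible n g \<Longrightarrow> \<nu> g = (if idempotent_class g then 1 else 0)"
  using assms unfolding is_chi_plus_def is_lattice_valuation_def by blast+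

lemma chi_plus_Or:
  assumes "is_chi_plus n \<nu>" "in_vars n a" "in_vars n b"
  shows "\<nu> (Or a b) = \<nu> a + \<nu> b - \<nu> (And a b)"
proof -
  have "\<nu> a + \<nu> b = \<nu> (Or a b) + \<nu> (And a b)"
    using assms unfolding is_chi_plus_def is_lattice_valuation_def by blast
  then show ?thesis by simp
qed

lemma chi_plus_unique:
  assumes \<nu>: "is_chi_plus n \<nu>" and \<nu>': "is_chi_plus n \<nu>'"
  shows "in_vars n a \<Longrightarrow> \<nu> a = \<nu>' a"
proof (induction "classes_below n a" arbitrary: a rule: less_induct)
  case less
  have Bot: "in_vars n Bot" by (simp add: in_vars_def)
  consider "nm_equiv a Bot" | "join_irreducible n a" | "\<not> nm_equiv a Bot" "\<not> join_irreducible n a"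
    by blast
  then show ?case
  proof cases
    case 1
    then show ?thesis using is_chi_plusD(1,2)[OF \<nu>] is_chi_plusD(1,2)[OF \<nu>'] less.prems Bot by metis
  next
    case 2
    then show ?thesis using is_chi_plusD(3)[OF \<nu>] is_chi_plusD(3)[OF \<nu>'] by simp
  next
    case 3
    then obtain b c where b: "in_vars n b" and c: "in_vars n c" and a: "nm_equiv a (Or b c)"
      and smaller: "classes_below n b < classes_below n a" "classes_below n c < classes_below n a"
        "classes_below n (And b c) < classes_below n a"
      using join_reducible_decomposition less.prems by blast
    have bc: "in_vars n (Or b c)" "in_vars n (And b c)" using b c by (simp_all add: in_vars_def)
    have "\<nu> a = \<nu> (Or b c)" "\<nu>' a = \<nu>' (Or b c)"
      using is_chi_plusD(1)[OF \<nu>] is_chi_plusD(1)[OF \<nu>'] less.prems bc a by blast+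
    then show ?thesis
      using chi_plus_Or[OF \<nu> b c] chi_plus_Or[OF \<nu>' b c] less.hyps[OF _ b] less.hyps[OF _ c]
        less.hyps[OF _ bc(2)] smaller by simp
  qed
qed

theorem theorem8:
  fixes n :: nat and \<phi> :: form
  assumes "n \<ge> 1" and "in_vars n \<phi>"
  shows "(\<exists>\<nu>. is_chi_plus n \<nu>) \<and>
         (\<forall>\<nu>. is_chi_plus n \<nu> \<longrightarrow>
            \<nu> \<phi> = real (card {\<mu> \<in> bool_assignments n. bool_eval \<mu> \<phi>}))"
  using is_chi_plus_model_count chi_plus_unique[OF _ is_chi_plus_model_count assms(2)]
  unfolding model_count_def by blast

end
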